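(* Let $V$ be a vertex algebra. The following are equivalent: (1) there exists a $V$-module $W$ with $g(V)_{\ge0}W\ne W$; (2) $g(V)_{\ge0}V\ne V$; (3) $\mathbf 1\notin g(V)_{\ge0}V$.
   Context: $(V,Y,\mathbf 1)$ is a vertex algebra; a $V$-module is a module for $V$ as a vertex algebra (no grading assumed). For a $V$-module $W$, $g(V)_{\ge0}W=\mathrm{span}\{v_nw\mid v\in V,\ n\ge0,\ w\in W\}$, where $Y_W(v,x)=\sum_nv_nx^{-n-1}$; $V$ is regarded as a module over itself. *)

theory Defs
  imports Complex_Main "HOL-Library.Groups_Big_Fun"
begin

text \<open>A vertex operator map is encoded by its modes: Y u n v = u_n v, where
  Y(u,x) = sum_n u_n x^(-n-1).  Binomial coefficients with integer upper entry
  are the generalized binomials (m gchoose i), computed in rat (they are integers).\<close>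

definition ibinom :: "int \<Rightarrow> nat \<Rightarrow> int" where
  "ibinom m i = floor ((of_int m :: rat) gchoose i)"

text \<open>All sums have finite support by the truncation property.\<close>

definition jacobi_identity ::
  "('k::field \<Rightarrow> 'w::ab_group_add \<Rightarrow> 'w) \<Rightarrow> ('v \<Rightarrow> int \<Rightarrow> 'v \<Rightarrow> 'v)
   \<Rightarrow> ('v \<Rightarrow> int \<Rightarrow> 'w \<Rightarrow> 'w) \<Rightarrow> bool" where
  "jacobi_identity sW YV YW \<longleftrightarrow>
    (\<forall>u v w m n l.
      Sum_any (\<lambda>i::nat. sW (of_int (ibinom m i)) (YW (YV u (l + int i) v) (m + n - int i) w))
      = Sum_any (\<lambda>i::nat. sW (of_int ((-1) ^ i * ibinom l i))
            (YW u (m + l - int i) (YW v (n + int i) w)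
             - sW (if even l then 1 else -1) (YW v (n + l - int i) (YW u (m + int i) w)))))"

definition vertex_algebra ::
  "('k::field \<Rightarrow> 'v::ab_group_add \<Rightarrow> 'v) \<Rightarrow> ('v \<Rightarrow> int \<Rightarrow> 'v \<Rightarrow> 'v) \<Rightarrow> 'v \<Rightarrow> bool" where
  "vertex_algebra sV Y vac \<longleftrightarrow>
     vector_space sV
   \<and> (\<forall>u n. Vector_Spaces.linear sV sV (Y u n))
   \<and> (\<forall>n v. Vector_Spaces.linear sV sV (\<lambda>u. Y u n v))
   \<and> (\<forall>u v. \<exists>N. \<forall>n\<ge>N. Y u n v = 0)
   \<and> (\<forall>n v. Y vac n v = (if n = -1 then v else 0))
   \<and> (\<forall>u. (\<forall>n\<ge>0. Y u n vac = 0) \<and> Y u (-1) vac = u)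
   \<and> jacobi_identity sV Y Y"

definition va_module ::
  "('k::field \<Rightarrow> 'v::ab_group_add \<Rightarrow> 'v) \<Rightarrow> ('v \<Rightarrow> int \<Rightarrow> 'v \<Rightarrow> 'v) \<Rightarrow> 'v
   \<Rightarrow> ('k \<Rightarrow> 'w::ab_group_add \<Rightarrow> 'w) \<Rightarrow> ('v \<Rightarrow> int \<Rightarrow> 'w \<Rightarrow> 'w) \<Rightarrow> bool" where
  "va_module sV Y vac sW YW \<longleftrightarrow>
     vector_space sW
   \<and> (\<forall>u n. Vector_Spaces.linear sW sW (YW u n))
   \<and> (\<forall>n w. Vector_Spaces.linear sV sW (\<lambda>u. YW u n w))
   \<and> (\<forall>u w. \<exists>N. \<forall>n\<ge>N. YW u n w = 0)
   \<and> (\<forall>n w. YW vac n w = (if n = -1 then w else 0))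
   \<and> jacobi_identity sW Y YW"

definition gpos :: "('k::field \<Rightarrow> 'w::ab_group_add \<Rightarrow> 'w) \<Rightarrow> ('v \<Rightarrow> int \<Rightarrow> 'w \<Rightarrow> 'w) \<Rightarrow> 'w set" where
  "gpos sW YW = module.span sW {YW v n w | v n w. 0 \<le> n}"

end

theory Submission
  imports Defs
begin

(* For n >= 0 every operator (u_n v)_k maps W into g(V)_{>=0} W.  This follows by
   descending induction on n from the Jacobi identity with l = n and m so large that
   u_{m+i} w = 0: its right-hand side then only involves the modes u_{m+n-i} with
   i <= n, and its left-hand side is (u_n v)_k w plus terms with u_{n+i} v, i > 0.
   Hence all of g(V)_{>=0} V acts into g(V)_{>=0} W, so if 1 lies in g(V)_{>=0} V then
   so does w = 1_{-1} w for every w in W.  Conversely g(V)_{>=0} V = V forces 1 into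
   it, and V is a module over itself. *)

lemma ibinom_0 [simp]: "ibinom m 0 = 1"
  by (simp add: ibinom_def)

lemma ibinom_eq_0_if_less:
  assumes "0 \<le> n" "n < int i"
  shows "ibinom n i = 0"
proof -
  have "(of_int n :: rat) = of_nat (nat n)"
    using assms(1) by simp
  then have "(of_int n :: rat) gchoose i = of_nat (nat n choose i)"
    by (simp only: binomial_gbinomial)
  with assms show ?thesis
    by (simp add: ibinom_def)
qed

lemma linear_eq_0: "Vector_Spaces.linear s1 s2 f \<Longrightarrow> f 0 = 0"
  using Vector_Spaces.linear_def module_hom.zero by blast

lemma (in module) Sum_any_in_span:
  assumes "\<And>i. g i \<in> span S"
  shows "Sum_any g \<in> span S"
  unfolding Sum_any.expand_set using assms by (intro span_sum) auto

lemma (in module) Sum_any_term_in_span: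
  assumes "finite {i. f i \<noteq> 0}" "Sum_any f \<in> span S" "\<And>i. i \<noteq> j \<Longrightarrow> f i \<in> span S"
  shows "f j \<in> span S"
proof -
  let ?rest = "f(j := 0)"
  have "Sum_any f = Sum_any (?rest(j := f j))"
    by simp
  also have "\<dots> = f j + Sum_any ?rest"
    using assms(1) by (intro Sum_any.update) (auto elim: finite_subset[rotated])
  finally have "f j = Sum_any f - Sum_any ?rest"
    by simp
  moreover have "Sum_any ?rest \<in> span S"
    using assms(3) by (intro Sum_any_in_span) (simp add: span_zero)
  ultimately show ?thesis
    using assms(2) by (simp add: span_diff)
qed

lemma nonneg_mode_in_gpos:
  assumes "vector_space sW" "0 \<le> n"
  shows "YW v n w \<in> gpos sW YW"
proof -
  interpret module sW
    using assms(1) by (simp add: module_iff_vector_space)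
  show ?thesis
    unfolding gpos_def using assms(2) by (intro span_base) blast
qed

lemma jacobi_sum_in_gpos:
  assumes M: "va_module sV Y vac sW YW" and "0 \<le> l" "0 \<le> m"
    and trunc: "\<And>j. m \<le> j \<Longrightarrow> YW u j w = 0"
  shows "Sum_any (\<lambda>i::nat. sW (of_int (ibinom m i)) (YW (Y u (l + int i) v) (k - int i) w))
           \<in> gpos sW YW"
proof -
  have vs: "vector_space sW" and jac: "jacobi_identity sW Y YW"
    and lin: "\<And>u j. Vector_Spaces.linear sW sW (YW u j)"
    using M unfolding va_module_def by blast+
  interpret module sW
    using vs by (simp add: module_iff_vector_space)
  let ?rhs = "\<lambda>i::nat. sW (of_int ((-1) ^ i * ibinom l i))
    (YW u (m + l - int i) (YW v (k - m + int i) w)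
     - sW (if even l then 1 else -1) (YW v (k - m + l - int i) (YW u (m + int i) w)))"
  have "?rhs i \<in> gpos sW YW" for i
  proof -
    have "YW v (k - m + l - int i) (YW u (m + int i) w) = 0"
      using trunc linear_eq_0[OF lin] by simp
    moreover have "ibinom l i = 0 \<or> YW u (m + l - int i) (YW v (k - m + int i) w) \<in> gpos sW YW"
    proof (cases "int i \<le> l")
      case True
      then show ?thesis
        using \<open>0 \<le> m\<close> by (simp add: nonneg_mode_in_gpos[OF vs])
    next
      case False
      then show ?thesis
        using \<open>0 \<le> l\<close> by (simp add: ibinom_eq_0_if_less)
    qed
    ultimately show ?thesis
      by (auto simp: gpos_def span_zero span_scale)
  qed
  then have "Sum_any ?rhs \<in> gpos sW YW"
    unfolding gpos_def by (rule Sum_any_in_span)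
  moreover note jac[unfolded jacobi_identity_def, rule_format,
      where u = u and v = v and w = w and m = m and n = "k - m" and l = l]
  ultimately show ?thesis
    by simp
qed

lemma mode_of_nonneg_product_in_gpos:
  assumes VA: "vertex_algebra sV Y vac" and M: "va_module sV Y vac sW YW" and "0 \<le> n"
  shows "YW (Y u n v) k w \<in> gpos sW YW"
proof -
  obtain N where N: "\<And>j. N \<le> j \<Longrightarrow> Y u j v = 0"
    using VA unfolding vertex_algebra_def by blast
  have vs: "vector_space sW" and trunc: "\<forall>u w. \<exists>N. \<forall>n\<ge>N. YW u n w = 0"
    and lin: "\<And>j w. Vector_Spaces.linear sV sW (\<lambda>u. YW u j w)"
    using M unfolding va_module_def by blast+
  interpret module sW
    using vs by (simp add: module_iff_vector_space)
  have YW_0: "YW 0 j w = 0" for j w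
    using linear_eq_0[OF lin] .
  show ?thesis
    using \<open>0 \<le> n\<close>
  proof (induction n arbitrary: k w rule: measure_induct_rule[of "\<lambda>n. nat (N - n)"])
    case (less n)
    show ?case
    proof (cases "N \<le> n")
      case True
      then show ?thesis
        using N YW_0 by (simp add: gpos_def span_zero)
    next
      case False
      obtain M0 where "\<forall>j\<ge>M0. YW u j w = 0"
        using trunc by blast
      then obtain m where "0 \<le> m" and m: "\<And>j. m \<le> j \<Longrightarrow> YW u j w = 0"
        by (intro that[of "max M0 0"]) auto
      define f where "f i = sW (of_int (ibinom m i)) (YW (Y u (n + int i) v) (k - int i) w)"
        for i :: nat
      have "f i = 0" if "nat (N - n) \<le> i" for i
        using that N YW_0 by (simp add: f_def)
      then have "finite {i. f i \<noteq> 0}"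
        by (intro finite_subset[OF _ finite_lessThan[of "nat (N - n)"]]) (use not_le in auto)
      moreover have "Sum_any f \<in> gpos sW YW"
        unfolding f_def using jacobi_sum_in_gpos[OF M less.prems \<open>0 \<le> m\<close> m] .
      moreover have "f i \<in> gpos sW YW" if "i \<noteq> 0" for i
      proof -
        have "YW (Y u (n + int i) v) (k - int i) w \<in> gpos sW YW"
          by (rule less.IH) (use that False less.prems in auto)
        then show ?thesis
          unfolding f_def gpos_def by (rule span_scale)
      qed
      ultimately have "f 0 \<in> gpos sW YW"
        unfolding gpos_def by (rule Sum_any_term_in_span)
      then show ?thesis
        by (simp add: f_def)
    qed
  qed
qed

lemma gpos_eq_UNIV_if_vacuum_in_gpos:
  assumes VA: "vertex_algebra sV Y vac" and M: "va_module sV Y vac sW YW"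
    and "vac \<in> gpos sV Y"
  shows "gpos sW YW = UNIV"
proof -
  interpret V: module sV
    using VA by (simp add: vertex_algebra_def module_iff_vector_space)
  interpret W: module sW
    using M by (simp add: va_module_def module_iff_vector_space)
  have lin: "\<And>j w. Vector_Spaces.linear sV sW (\<lambda>u. YW u j w)"
    using M unfolding va_module_def by blast
  let ?T = "{a. \<forall>k w. YW a k w \<in> gpos sW YW}"
  have "V.subspace ?T"
    using lin linear_eq_0[OF lin] unfolding V.subspace_def gpos_def
    by (auto simp: Vector_Spaces.linear_iff W.span_zero W.span_add W.span_scale)
  moreover have "{Y v n w |v n w. 0 \<le> n} \<subseteq> ?T"
    using mode_of_nonneg_product_in_gpos[OF VA M] by blast
  ultimately have "gpos sV Y \<subseteq> ?T"
    unfolding gpos_def by (rule V.span_minimal[rotated])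
  with \<open>vac \<in> gpos sV Y\<close> have "YW vac (-1) w \<in> gpos sW YW" for w
    by blast
  moreover have "YW vac (-1) w = w" for w
    using M unfolding va_module_def by simp
  ultimately show ?thesis
    by auto
qed

lemma va_module_self:
  "vertex_algebra sV Y vac \<Longrightarrow> va_module sV Y vac sV Y"
  unfolding vertex_algebra_def va_module_def by blast

theorem mainTheorem9:
  fixes sV :: "'k::field \<Rightarrow> 'v::ab_group_add \<Rightarrow> 'v"
    and Y :: "'v \<Rightarrow> int \<Rightarrow> 'v \<Rightarrow> 'v"
    and vac :: 'v
  assumes "vertex_algebra sV Y vac"
  shows "((\<exists>(sW :: 'k \<Rightarrow> 'w::ab_group_add \<Rightarrow> 'w) YW.
              va_module sV Y vac sW YW \<and> gpos sW YW \<noteq> UNIV) \<longrightarrow> gpos sV Y \<noteq> UNIV)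
       \<and> (gpos sV Y \<noteq> UNIV \<longrightarrow>
            (\<exists>(sW :: 'k \<Rightarrow> 'v \<Rightarrow> 'v) YW. va_module sV Y vac sW YW \<and> gpos sW YW \<noteq> UNIV))
       \<and> (gpos sV Y \<noteq> UNIV \<longleftrightarrow> vac \<notin> gpos sV Y)"
proof -
  have self: "va_module sV Y vac sV Y"
    using assms by (rule va_module_self)
  have vacuum_iff: "vac \<in> gpos sV Y \<longleftrightarrow> gpos sV Y = UNIV"
    using gpos_eq_UNIV_if_vacuum_in_gpos[OF assms self] by blast
  show ?thesis
    using gpos_eq_UNIV_if_vacuum_in_gpos[OF assms] self vacuum_iff by blast
qed

end
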